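(* Let $n\geq 2$, $m\geq 1$ be integers and $K'_{n,m}=T(3,3m+1;2,n-2)$. Its (symmetrized) Alexander polynomial is $$\Delta(K'_{n,m})=(-1)^n+\sum_{i=1}^{n-2}(-1)^{n-i}(t^i+t^{-i})-\sum_{k=0}^{m-1}(t^{n+3k}+t^{-n-3k})+\sum_{k=0}^{m-1}(t^{n+3k+1}+t^{-n-3k-1}).$$
   Context: The twisted torus knot $T(u,v;u',v')$ is obtained from the torus knot $T(u,v)$ by adding $v'$ full right-handed twists on $u'$ adjacent strands. *)

theory Defs
  imports Complex_Main "Jordan_Normal_Form.Determinant"
begin

text \<open>Braid words on n strands: a positive integer g stands for the Artin generator
  sigma_g, a negative integer g for its inverse (1 <= |g| <= n-1).\<close>

text \<open>For sigma_i it is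
  I_(i-2) + [[1,0,0],[t,-t,1],[0,0,1]] + I_(n-i-2) (truncated at the borders).\<close>
definition burau_gen :: "nat \<Rightarrow> int \<Rightarrow> complex \<Rightarrow> complex mat" where
  "burau_gen n g t = (let i = nat \<bar>g\<bar> in
     mat (n - 1) (n - 1) (\<lambda>(r, s).
       if r + 1 = i then
         (if s + 2 = i then (if g > 0 then t else 1)
          else if s + 1 = i then (if g > 0 then - t else - (1 / t))
          else if s = i then (if g > 0 then 1 else 1 / t)
          else 0)
       else (if r = s then 1 else 0)))"

definition burau :: "nat \<Rightarrow> int list \<Rightarrow> complex \<Rightarrow> complex mat" where
  "burau n w t = foldr (\<lambda>g M. burau_gen n g t * M) w (1\<^sub>m (n - 1))"

text \<open>Laurent polynomials with integer coefficients: finitely supported c :: int => int,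
  evaluated at t.\<close>
definition lpeval :: "(int \<Rightarrow> int) \<Rightarrow> complex \<Rightarrow> complex" where
  "lpeval c t = (\<Sum>k\<in>{k. c k \<noteq> 0}. of_int (c k) * t powi k)"

text \<open>The symmetrized Alexander polynomial of the closure of an n-strand braid word:
  the unique finitely supported, symmetric Laurent polynomial with value 1 at t = 1
  which agrees up to a unit (+-t^j) with the Burau formula
  Delta(t) = (1 - t)/(1 - t^n) * det(I - burau(t)).\<close>
definition alexander_sym :: "nat \<Rightarrow> int list \<Rightarrow> (int \<Rightarrow> int)" where
  "alexander_sym n w = (THE c. finite {k. c k \<noteq> 0} \<and> (\<forall>k. c k = c (- k)) \<and>
     sum c {k. c k \<noteq> 0} = 1 \<and>
     (\<exists>\<epsilon>\<in>{1, -1::complex}. \<exists>j::int. \<forall>t::complex. t \<noteq> 0 \<and> 1 - t ^ n \<noteq> 0 \<longrightarrow>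
        (1 - t) * det (1\<^sub>m (n - 1) - burau n w t) = \<epsilon> * t powi j * (1 - t ^ n) * lpeval c t))"

text \<open>Braid word of the twisted torus knot T(u,v;u',v'):
  (sigma_1 ... sigma_(u-1))^v followed by v' full right-handed twists
  (sigma_1 ... sigma_(u'-1))^(u' v') on the first u' strands.\<close>
definition twisted_torus_braid :: "nat \<Rightarrow> nat \<Rightarrow> nat \<Rightarrow> nat \<Rightarrow> int list" where
  "twisted_torus_braid u v u' v' =
     concat (replicate v (map int [1..<u])) @ concat (replicate (u' * v') (map int [1..<u']))"

end

theory Submission
  imports Defs "HOL-Computational_Algebra.Polynomial" "HOL-Library.Infinite_Set"
begin

text \<open>
  In the reduced Burau representation of \<open>B\<^sub>3\<close> the full twist \<open>(\<sigma>\<^sub>1\<sigma>\<^sub>2)^3\<close> acts as the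
  scalar \<open>t^3\<close>.  Hence the braid \<open>(\<sigma>\<^sub>1\<sigma>\<^sub>2)^(3m+1) \<sigma>\<^sub>1^(2(n-2))\<close> of \<open>K'\<close> has an explicit
  \<open>2\<times>2\<close> Burau matrix \<open>B\<close>, and summing the geometric series in the claimed polynomial \<open>\<Delta>\<close>
  gives \<open>(1 - t) det (I - B) = t^(n-2+3m) (1 - t^3) \<Delta>\<close>.  As \<open>\<Delta>\<close> is symmetric with
  \<open>\<Delta>(1) = 1\<close>, it is the symmetrized Alexander polynomial: if two such Laurent polynomials
  agree up to a unit \<open>\<plusminus>t^j\<close> at infinitely many points, their coefficient sequences differ
  by a shift, symmetry makes twice the shift a period of a finitely supported sequence, so the
  shift is zero, and the value at \<open>1\<close> fixes the sign.
\<close>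

section \<open>Reduced Burau matrices of 3-braids\<close>

definition mat2 :: "'a::zero \<Rightarrow> 'a \<Rightarrow> 'a \<Rightarrow> 'a \<Rightarrow> 'a mat" where
  "mat2 a b c d = mat 2 2 (\<lambda>(i, j). if i = 0 then if j = 0 then a else b else if j = 0 then c else d)"

lemma mat2_mult:
  fixes a b c d e f g h :: "'a::comm_semiring_0"
  shows "mat2 a b c d * mat2 e f g h = mat2 (a * e + b * g) (a * f + b * h) (c * e + d * g) (c * f + d * h)"
  by (rule eq_matI) (auto simp: mat2_def scalar_prod_def less_2_cases_iff numeral_2_eq_2)

lemma mat2_minus: "mat2 a b c d - mat2 e f g h = mat2 (a - e) (b - f) (c - g) (d - h)"
  by (rule eq_matI) (auto simp: mat2_def less_2_cases_iff)

lemma one_mat2: "1\<^sub>m 2 = mat2 1 0 0 1"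
  by (rule eq_matI) (auto simp: mat2_def less_2_cases_iff)

lemma det_mat2: "det (mat2 a b c d) = a * d - b * c"
proof -
  have "det (mat2 a b c d) = (\<Sum>j<2. mat2 a b c d $$ (0, j) * cofactor (mat2 a b c d) 0 j)"
    by (rule laplace_expansion_row) (auto simp: mat2_def)
  also have "\<dots> = a * d - b * c"
    by (simp add: cofactor_def numeral_2_eq_2 det_single mat_delete_def mat2_def)
  finally show ?thesis .
qed

lemma burau_gen_carrier: "burau_gen n g t \<in> carrier_mat (n - 1) (n - 1)"
  by (simp add: burau_gen_def Let_def)

lemma burau_Nil: "burau n [] t = 1\<^sub>m (n - 1)"
  by (simp add: burau_def)

lemma burau_Cons: "burau n (g # w) t = burau_gen n g t * burau n w t"
  by (simp add: burau_def)

lemma burau_carrier: "burau n w t \<in> carrier_mat (n - 1) (n - 1)"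
proof (induction w)
  case Nil
  show ?case unfolding burau_Nil by (rule one_carrier_mat)
next
  case (Cons g w)
  show ?case unfolding burau_Cons by (rule mult_carrier_mat[OF burau_gen_carrier Cons])
qed

lemma burau_append: "burau n (v @ w) t = burau n v t * burau n w t"
proof (induction v)
  case Nil
  show ?case unfolding burau_Nil append_Nil by (rule left_mult_one_mat[symmetric, OF burau_carrier])
next
  case (Cons g v)
  show ?case unfolding append_Cons burau_Cons Cons.IH
    by (rule assoc_mult_mat[symmetric, OF burau_gen_carrier burau_carrier burau_carrier])
qed

lemma burau3_sigma1: "burau_gen 3 1 t = mat2 (- t) 1 0 1"
  by (rule eq_matI) (auto simp: burau_gen_def mat2_def less_2_cases_iff numeral_2_eq_2)

lemma burau3_sigma2: "burau_gen 3 2 t = mat2 1 0 t (- t)"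
  by (rule eq_matI) (auto simp: burau_gen_def mat2_def less_2_cases_iff numeral_2_eq_2)

lemma burau3_full_twist_power:
  "burau 3 (concat (replicate (3 * k) [1, 2])) t = mat2 (t ^ (3 * k)) 0 0 (t ^ (3 * k))"
proof (induction k)
  case 0
  show ?case by (simp add: burau_Nil one_mat2)
next
  case (Suc k)
  have "concat (replicate (3 * Suc k) [1, 2::int]) = [1, 2, 1, 2, 1, 2] @ concat (replicate (3 * k) [1, 2])"
    by (simp add: numeral_3_eq_3)
  then show ?case
    by (simp only: burau_append Suc)
      (simp add: burau_Cons burau_Nil burau3_sigma1 burau3_sigma2 one_mat2 mat2_mult power_add
        power3_eq_cube algebra_simps)
qed

lemma burau3_sigma1_power: "burau 3 (replicate k 1) t = mat2 ((- t) ^ k) (\<Sum>i<k. (- t) ^ i) 0 1"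
proof (induction k)
  case 0
  show ?case by (simp add: burau_Nil one_mat2)
next
  case (Suc k)
  have "(\<Sum>i<Suc k. (- t) ^ i) = 1 + (- t) * (\<Sum>i<k. (- t) ^ i)"
    by (simp only: sum.lessThan_Suc_shift sum_distrib_left) simp
  then show ?case
    by (simp add: burau_Cons Suc burau3_sigma1 mat2_mult)
qed

lemma twisted_torus_braid_3_2:
  "twisted_torus_braid 3 v 2 l = concat (replicate v [1, 2]) @ replicate (2 * l) 1"
  by (simp add: twisted_torus_braid_def numeral_3_eq_3 numeral_2_eq_2 upt_rec)

lemma burau_twisted_torus_3_2:
  "burau 3 (twisted_torus_braid 3 (3 * m + 1) 2 l) t =
     mat2 0 (- (t ^ (3 * m + 1))) (t ^ (3 * m + 2 * l + 1)) (t ^ (3 * m + 1) * ((\<Sum>i<2 * l. (- t) ^ i) - 1))"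
proof -
  have "twisted_torus_braid 3 (3 * m + 1) 2 l =
      [1, 2] @ concat (replicate (3 * m) [1, 2]) @ replicate (2 * l) 1"
    by (simp add: twisted_torus_braid_3_2)
  then have "burau 3 (twisted_torus_braid 3 (3 * m + 1) 2 l) t =
      burau 3 [1, 2] t * (burau 3 (concat (replicate (3 * m) [1, 2])) t * burau 3 (replicate (2 * l) 1) t)"
    by (simp only: burau_append)
  also have "\<dots> = mat2 0 (- t) t (- t) * (mat2 (t ^ (3 * m)) 0 0 (t ^ (3 * m)) *
      mat2 (t ^ (2 * l)) (\<Sum>i<2 * l. (- t) ^ i) 0 1)"
    by (simp add: burau_Cons burau_Nil burau3_sigma1 burau3_sigma2 one_mat2 mat2_mult
        burau3_full_twist_power burau3_sigma1_power power_mult)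
  also have "\<dots> = mat2 0 (- (t ^ (3 * m + 1))) (t ^ (3 * m + 2 * l + 1))
      (t ^ (3 * m + 1) * ((\<Sum>i<2 * l. (- t) ^ i) - 1))"
    by (simp add: mat2_mult power_add algebra_simps)
  finally show ?thesis .
qed

lemma det_burau_twisted_torus_3_2:
  "det (1\<^sub>m (3 - 1) - burau 3 (twisted_torus_braid 3 (3 * m + 1) 2 l) t) =
     1 - t ^ (3 * m + 1) * ((\<Sum>i<2 * l. (- t) ^ i) - 1) + t ^ (6 * m + 2 * l + 2)"
proof -
  have "t ^ (3 * m + 1) * t ^ (3 * m + 2 * l + 1) = t ^ (6 * m + 2 * l + 2)"
    by (simp flip: power_add)
  then show ?thesis
    unfolding burau_twisted_torus_3_2 by (simp add: one_mat2 mat2_minus det_mat2)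
qed

section \<open>Evaluating Laurent polynomials\<close>

text \<open>Unlike \<open>lpeval\<close>, a sum over a fixed window \<open>F\<close> is linear in the coefficients without
  finiteness side conditions.\<close>

definition lpeval_on :: "int set \<Rightarrow> (int \<Rightarrow> int) \<Rightarrow> complex \<Rightarrow> complex" where
  "lpeval_on F c t = (\<Sum>k\<in>F. of_int (c k) * t powi k)"

lemma lpeval_eq_lpeval_on:
  assumes "finite F" and "{k. c k \<noteq> 0} \<subseteq> F"
  shows "lpeval c t = lpeval_on F c t"
  unfolding lpeval_def lpeval_on_def by (rule sum.mono_neutral_left) (use assms in auto)

lemma lpeval_on_add: "lpeval_on F (\<lambda>k. c k + d k) t = lpeval_on F c t + lpeval_on F d t"
  by (simp add: lpeval_on_def sum.distrib algebra_simps)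

lemma lpeval_on_diff: "lpeval_on F (\<lambda>k. c k - d k) t = lpeval_on F c t - lpeval_on F d t"
  by (simp add: lpeval_on_def sum_subtractf algebra_simps)

lemma lpeval_on_scale: "lpeval_on F (\<lambda>k. a * c k) t = of_int a * lpeval_on F c t"
  by (simp add: lpeval_on_def sum_distrib_left algebra_simps)

lemma lpeval_on_sum: "lpeval_on F (\<lambda>k. \<Sum>i\<in>I. c i k) t = (\<Sum>i\<in>I. lpeval_on F (c i) t)"
  by (simp add: lpeval_on_def sum_distrib_right sum.swap[of _ F])

definition lmonom :: "int \<Rightarrow> int \<Rightarrow> int" where
  "lmonom a k = (if k = a then 1 else 0)"

definition lsym :: "int \<Rightarrow> int \<Rightarrow> int" where
  "lsym a k = lmonom a k + lmonom (- a) k"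

lemma lmonom_0_uminus [simp]: "lmonom 0 (- k) = lmonom 0 k"
  by (simp add: lmonom_def)

lemma lsym_uminus [simp]: "lsym a (- k) = lsym a k"
  by (simp add: lsym_def lmonom_def)

lemma lpeval_on_lmonom:
  assumes "finite F" and "a \<in> F"
  shows "lpeval_on F (lmonom a) t = t powi a"
proof -
  have "lpeval_on F (lmonom a) t = (\<Sum>k\<in>F. if k = a then t powi k else 0)"
    unfolding lpeval_on_def by (intro sum.cong) (auto simp: lmonom_def)
  then show ?thesis
    using assms by simp
qed

lemma lpeval_on_lsym:
  assumes "finite F" and "a \<in> F" and "- a \<in> F"
  shows "lpeval_on F (lsym a) t = t powi a + t powi (- a)"
  unfolding lsym_def lpeval_on_add using assms by (simp add: lpeval_on_lmonom)

lemma lpeval_lincomb: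
  assumes "finite {k. c k \<noteq> 0}" and "finite {k. d k \<noteq> 0}"
  shows "lpeval (\<lambda>k. a * c k + b * d k) t = of_int a * lpeval c t + of_int b * lpeval d t"
proof -
  let ?F = "{k. c k \<noteq> 0} \<union> {k. d k \<noteq> 0}"
  have "finite ?F"
    using assms by blast
  then show ?thesis
    by (subst (1 2 3) lpeval_eq_lpeval_on[of ?F]) (auto simp: lpeval_on_add lpeval_on_scale)
qed

lemma lpeval_at_1: "lpeval c 1 = of_int (sum c {k. c k \<noteq> 0})"
  by (simp add: lpeval_def)

lemma lpeval_shift:
  assumes "t \<noteq> 0"
  shows "lpeval (\<lambda>k. c (k - j)) t = t powi j * lpeval c t"
proof -
  have supp: "{k. c (k - j) \<noteq> 0} = (\<lambda>k. k + j) ` {k. c k \<noteq> 0}"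
    by force
  have "lpeval (\<lambda>k. c (k - j)) t = (\<Sum>k\<in>{k. c k \<noteq> 0}. of_int (c k) * t powi (k + j))"
    unfolding lpeval_def supp by (subst sum.reindex) (auto simp: inj_on_def)
  also have "\<dots> = t powi j * lpeval c t"
    unfolding lpeval_def sum_distrib_left using assms by (intro sum.cong) (auto simp: power_int_add)
  finally show ?thesis .
qed

definition shifted_poly :: "int \<Rightarrow> (int \<Rightarrow> int) \<Rightarrow> complex poly" where
  "shifted_poly b c = (\<Sum>i\<in>{- b..b}. monom (of_int (c i)) (nat (i + b)))"

lemma poly_shifted_poly:
  assumes "{k. c k \<noteq> 0} \<subseteq> {- b..b}" and "t \<noteq> 0"
  shows "poly (shifted_poly b c) t = t powi b * lpeval c t"
proof -
  have "t powi b * lpeval c t = (\<Sum>i\<in>{- b..b}. of_int (c i) * t powi (i + b))"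
    unfolding lpeval_eq_lpeval_on[OF finite_atLeastAtMost_int assms(1)] lpeval_on_def sum_distrib_left
    using assms(2) by (intro sum.cong) (auto simp: power_int_add)
  also have "\<dots> = poly (shifted_poly b c) t"
    by (auto simp: shifted_poly_def poly_sum poly_monom power_int_def intro!: sum.cong)
  finally show ?thesis ..
qed

lemma coeff_shifted_poly:
  assumes "k \<in> {- b..b}"
  shows "coeff (shifted_poly b c) (nat (k + b)) = of_int (c k)"
proof -
  have "coeff (shifted_poly b c) (nat (k + b)) = (\<Sum>i\<in>{- b..b}. if i = k then of_int (c i) else 0)"
    unfolding shifted_poly_def coeff_sum coeff_monom by (rule sum.cong) (use assms in auto)
  then show ?thesis
    using assms by simp
qed

lemma lpeval_eq_0_imp_coeffs_eq_0:
  assumes fin: "finite {k. c k \<noteq> 0}" and "infinite S"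
    and zero: "\<And>t. t \<in> S \<Longrightarrow> t \<noteq> 0 \<and> lpeval c t = 0"
  shows "c k = 0"
proof -
  obtain b where "abs ` {k. c k \<noteq> 0} \<subseteq> {..b}"
    using fin finite_int_iff_bounded_le by blast
  then have supp: "{k. c k \<noteq> 0} \<subseteq> {- b..b}"
    by force
  have "shifted_poly b c = 0"
  proof (rule ccontr)
    assume "shifted_poly b c \<noteq> 0"
    then have "finite {t. poly (shifted_poly b c) t = 0}"
      by (rule poly_roots_finite)
    moreover have "S \<subseteq> {t. poly (shifted_poly b c) t = 0}"
      using zero poly_shifted_poly[OF supp] by auto
    ultimately show False
      using \<open>infinite S\<close> finite_subset by blast
  qed
  then show "c k = 0"
    using coeff_shifted_poly[of k b c] supp by (cases "k \<in> {- b..b}") auto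
qed

section \<open>Uniqueness of the symmetrized Alexander polynomial\<close>

lemma periodic_finite_support_eq_0:
  fixes f :: "int \<Rightarrow> 'a::zero"
  assumes fin: "finite {k. f k \<noteq> 0}" and "p \<noteq> 0" and periodic: "\<And>x. f (x + p) = f x"
  shows "f k = 0"
proof (rule ccontr)
  assume "f k \<noteq> 0"
  have "f (k + p * int i) = f k" for i
    by (induction i) (simp_all add: algebra_simps periodic[of "k + p * int _", simplified algebra_simps])
  then have "range (\<lambda>i. k + p * int i) \<subseteq> {k. f k \<noteq> 0}"
    using \<open>f k \<noteq> 0\<close> by auto
  moreover have "infinite (range (\<lambda>i. k + p * int i))"
    using \<open>p \<noteq> 0\<close> by (auto simp: inj_on_def dest!: finite_imageD)
  ultimately show False
    using fin finite_subset by blast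
qed

lemma finite_support_shift:
  fixes f :: "int \<Rightarrow> 'a::zero"
  assumes "finite {k. f k \<noteq> 0}"
  shows "finite {k. f (k - i) \<noteq> 0}"
proof -
  have "{k. f (k - i) \<noteq> 0} = (\<lambda>k. k + i) ` {k. f k \<noteq> 0}"
    by force
  then show ?thesis
    using assms by simp
qed

lemma lpeval_unit_multiple_imp_shift:
  assumes fin: "finite {k. c k \<noteq> 0}" "finite {k. c' k \<noteq> 0}"
    and units: "\<epsilon> \<in> {1, -1}" "\<epsilon>' \<in> {1, -1}" and "infinite S" and "0 \<notin> S"
    and eq: "\<And>t. t \<in> S \<Longrightarrow> \<epsilon> * t powi j * lpeval c t = \<epsilon>' * t powi j' * lpeval c' t"
  obtains \<sigma> :: int where "\<sigma> \<in> {1, -1}" and "\<And>k. c k = \<sigma> * c' (k + (j - j'))"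
proof -
  obtain e e' :: int where e: "e \<in> {1, -1}" "\<epsilon> = of_int e" and e': "e' \<in> {1, -1}" "\<epsilon>' = of_int e'"
    using units by (metis insertE of_int_1 of_int_minus singletonD insertI1 insertI2)
  define d where "d k = e * c (k - j) + (- e') * c' (k - j')" for k
  have "{k. d k \<noteq> 0} \<subseteq> {k. c (k - j) \<noteq> 0} \<union> {k. c' (k - j') \<noteq> 0}"
    by (auto simp: d_def)
  then have fin_d: "finite {k. d k \<noteq> 0}"
    using finite_support_shift[OF fin(1)] finite_support_shift[OF fin(2)] by (meson finite_UnI finite_subset)
  have "lpeval d t = 0" if "t \<in> S" for t
  proof -
    have "t \<noteq> 0"
      using that \<open>0 \<notin> S\<close> by blast
    have "lpeval d t = \<epsilon> * t powi j * lpeval c t - \<epsilon>' * t powi j' * lpeval c' t"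
      unfolding d_def lpeval_lincomb[OF finite_support_shift[OF fin(1)] finite_support_shift[OF fin(2)]]
      using \<open>t \<noteq> 0\<close> by (simp add: lpeval_shift e e')
    then show ?thesis
      using eq[OF that] by simp
  qed
  then have "d k = 0" for k
    using lpeval_eq_0_imp_coeffs_eq_0[OF fin_d \<open>infinite S\<close>] \<open>0 \<notin> S\<close> by blast
  then have "e * c k = e' * c' (k + (j - j'))" for k
    using \<open>d (k + j) = 0\<close> by (simp add: d_def add_diff_eq)
  then have "c k = e * e' * c' (k + (j - j'))" for k
    using e(1) by (metis (no_types) insertE singletonD mult_1 mult_minus1 minus_equation_iff mult.assoc)
  then show thesis
    using that[of "e * e'"] e e' by auto
qed

lemma symmetric_normalized_shift_eq:
  fixes c c' :: "int \<Rightarrow> int"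
  assumes fin: "finite {k. c' k \<noteq> 0}"
    and sym: "\<And>k. c k = c (- k)" "\<And>k. c' k = c' (- k)"
    and sum_1: "sum c {k. c k \<noteq> 0} = 1" "sum c' {k. c' k \<noteq> 0} = 1"
    and \<sigma>: "\<sigma> \<in> {1, -1}" and shift: "\<And>k. c k = \<sigma> * c' (k + \<delta>)"
  shows "c = c'"
proof -
  have "c' (x + 2 * \<delta>) = c' x" for x
  proof -
    have "\<sigma> * c' (x + 2 * \<delta>) = c (x + \<delta>)"
      using shift[of "x + \<delta>"] by (simp add: algebra_simps)
    also have "\<dots> = c (- x - \<delta>)"
      using sym(1)[of "x + \<delta>"] by simp
    also have "\<dots> = \<sigma> * c' (- x)"
      using shift[of "- x - \<delta>"] by simp
    finally show ?thesis
      using \<sigma> sym(2)[of x] by auto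
  qed
  moreover obtain k where "c' k \<noteq> 0"
    using sum_1(2) by fastforce
  ultimately have "\<delta> = 0"
    using periodic_finite_support_eq_0[OF fin, of "2 * \<delta>"] by auto
  then have c: "c = (\<lambda>k. \<sigma> * c' k)"
    using shift by auto
  then have "sum c {k. c k \<noteq> 0} = \<sigma> * sum c' {k. c' k \<noteq> 0}"
    using \<sigma> by (auto simp: sum_distrib_left)
  then have "\<sigma> = 1"
    using sum_1 by simp
  then show ?thesis
    using c by simp
qed

definition is_alexander_sym :: "nat \<Rightarrow> int list \<Rightarrow> (int \<Rightarrow> int) \<Rightarrow> bool" where
  "is_alexander_sym n w c \<longleftrightarrow> finite {k. c k \<noteq> 0} \<and> (\<forall>k. c k = c (- k)) \<and>
     sum c {k. c k \<noteq> 0} = 1 \<and>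
     (\<exists>\<epsilon>\<in>{1, -1::complex}. \<exists>j::int. \<forall>t::complex. t \<noteq> 0 \<and> 1 - t ^ n \<noteq> 0 \<longrightarrow>
        (1 - t) * det (1\<^sub>m (n - 1) - burau n w t) = \<epsilon> * t powi j * (1 - t ^ n) * lpeval c t)"

text \<open>For \<open>n = 0\<close> the condition on \<open>t\<close> is never met, so uniqueness needs \<open>n \<ge> 1\<close>.\<close>

lemma is_alexander_sym_unique:
  assumes "n \<ge> 1" and "is_alexander_sym n w c" and "is_alexander_sym n w c'"
  shows "c = c'"
proof -
  define S where "S = UNIV - insert 0 {t::complex. t ^ n = 1}"
  have "infinite S"
    unfolding S_def using finite_roots_unity[OF \<open>n \<ge> 1\<close>]
    by (intro Diff_infinite_finite infinite_UNIV_char_0) auto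
  have S: "t \<noteq> 0" "1 - t ^ n \<noteq> 0" if "t \<in> S" for t
    using that by (auto simp: S_def)
  define X where "X t = (1 - t) * det (1\<^sub>m (n - 1) - burau n w t)" for t
  obtain \<epsilon> j where fin: "finite {k. c k \<noteq> 0}" and sym: "\<And>k. c k = c (- k)"
    and sum_1: "sum c {k. c k \<noteq> 0} = 1" and unit: "\<epsilon> \<in> {1, -1}"
    and X: "\<And>t. t \<in> S \<Longrightarrow> X t = \<epsilon> * t powi j * (1 - t ^ n) * lpeval c t"
    using assms(2) S unfolding is_alexander_sym_def X_def by blast
  obtain \<epsilon>' j' where fin': "finite {k. c' k \<noteq> 0}" and sym': "\<And>k. c' k = c' (- k)"
    and sum_1': "sum c' {k. c' k \<noteq> 0} = 1" and unit': "\<epsilon>' \<in> {1, -1}"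
    and X': "\<And>t. t \<in> S \<Longrightarrow> X t = \<epsilon>' * t powi j' * (1 - t ^ n) * lpeval c' t"
    using assms(3) S unfolding is_alexander_sym_def X_def by blast
  have "0 \<notin> S"
    by (simp add: S_def)
  have unit_multiple: "\<epsilon> * t powi j * lpeval c t = \<epsilon>' * t powi j' * lpeval c' t" if "t \<in> S" for t
    using X[OF that] X'[OF that] S(2)[OF that] by (simp add: mult.assoc)
  then obtain \<sigma> where "\<sigma> \<in> {1, -1}" "\<And>k. c k = \<sigma> * c' (k + (j - j'))"
    using lpeval_unit_multiple_imp_shift[OF fin fin' unit unit' \<open>infinite S\<close> \<open>0 \<notin> S\<close> unit_multiple]
    by blast
  then show ?thesis
    using symmetric_normalized_shift_eq[OF fin' sym sym' sum_1 sum_1'] by blast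
qed

lemma alexander_sym_eqI:
  assumes "n \<ge> 1" and "is_alexander_sym n w c"
  shows "alexander_sym n w = c"
  unfolding alexander_sym_def is_alexander_sym_def[symmetric]
  using assms is_alexander_sym_unique by blast

section \<open>The Alexander polynomial of \<open>K'\<close>\<close>

definition Delta_K' :: "nat \<Rightarrow> nat \<Rightarrow> complex \<Rightarrow> complex" where
  "Delta_K' n m t = (-1) ^ n + (\<Sum>i = 1..n - 2. (-1) ^ (n - i) * (t ^ i + inverse (t ^ i)))
    - (\<Sum>k<m. t ^ (n + 3 * k) + inverse (t ^ (n + 3 * k)))
    + (\<Sum>k<m. t ^ (n + 3 * k + 1) + inverse (t ^ (n + 3 * k + 1)))"

text \<open>\<open>alternating_part r\<close> is the symmetrized Alexander polynomial of the torus knot \<open>T(2, 2r + 1)\<close>.\<close>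

definition alternating_part :: "nat \<Rightarrow> complex \<Rightarrow> complex" where
  "alternating_part r t = (-1) ^ r + (\<Sum>i = 1..r. (-1) ^ (r - i) * (t ^ i + inverse (t ^ i)))"

definition twist_part :: "nat \<Rightarrow> nat \<Rightarrow> complex \<Rightarrow> complex" where
  "twist_part n m t =
    (\<Sum>k<m. (t ^ (n + 3 * k + 1) + inverse (t ^ (n + 3 * k + 1))) - (t ^ (n + 3 * k) + inverse (t ^ (n + 3 * k))))"

lemma Delta_K'_eq_parts: "Delta_K' (r + 2) m t = alternating_part r t + twist_part (r + 2) m t"
proof -
  have "(\<Sum>i = 1..r. (-1) ^ (r + 2 - i) * (t ^ i + inverse (t ^ i))) =
      (\<Sum>i = 1..r. (-1) ^ (r - i) * (t ^ i + inverse (t ^ i)))"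
    by (intro sum.cong) (auto simp: Suc_diff_le)
  then show ?thesis
    by (simp add: Delta_K'_def alternating_part_def twist_part_def sum_subtractf)
qed

lemma alternating_part_Suc:
  "alternating_part (Suc r) t = - alternating_part r t + (t ^ Suc r + inverse (t ^ Suc r))"
proof -
  have "(\<Sum>i = 1..r. (-1) ^ (Suc r - i) * (t ^ i + inverse (t ^ i))) =
      - (\<Sum>i = 1..r. (-1) ^ (r - i) * (t ^ i + inverse (t ^ i)))"
    unfolding sum_negf[symmetric] by (intro sum.cong) (auto simp: Suc_diff_le)
  then show ?thesis
    by (simp add: alternating_part_def)
qed

lemma alternating_part_closed_form:
  assumes "t \<noteq> 0"
  shows "t ^ r * alternating_part r t = (\<Sum>j\<le>2 * r. (- t) ^ j)"
proof (induction r)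
  case 0
  show ?case by (simp add: alternating_part_def)
next
  case (Suc r)
  have "(\<Sum>j\<le>2 * Suc r. (- t) ^ j) = (\<Sum>j\<le>Suc (Suc (2 * r)). (- t) ^ j)"
    by (simp only: mult_Suc_right add_2_eq_Suc)
  also have "\<dots> = 1 + (- t) * (\<Sum>j\<le>Suc (2 * r). (- t) ^ j)"
    by (simp only: sum.atMost_Suc_shift[of _ "Suc (2 * r)"] sum_distrib_left power_0 power_Suc)
  also have "\<dots> = 1 + (- t) * (t ^ r * alternating_part r t) + t ^ (2 * r + 2)"
    by (simp add: Suc.IH algebra_simps)
  also have "\<dots> = t ^ Suc r * alternating_part (Suc r) t"
  proof -
    have "t ^ (2 * r + 2) = t ^ r * t ^ r * t * t"
      by (simp add: power_add mult_2 power2_eq_square)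
    then show ?thesis
      using assms by (simp add: alternating_part_Suc field_simps)
  qed
  finally show ?case ..
qed

lemma alternating_part_at_1: "alternating_part r 1 = 1"
proof -
  have "(\<Sum>j\<le>2 * r. (-1::complex) ^ j) = 1"
    by (induction r) (simp_all add: numeral_2_eq_2)
  then show ?thesis
    using alternating_part_closed_form[of 1 r] by simp
qed

lemma twist_part_closed_form:
  assumes "t \<noteq> 0"
  shows "(1 - t ^ 3) * t ^ (n + 3 * m) * twist_part n m t =
    (t - 1) * (1 - t ^ (3 * m)) * (t ^ (2 * n) * t ^ (3 * m) - t ^ 2)"
proof (induction m)
  case 0
  show ?case by (simp add: twist_part_def)
next
  case (Suc m)
  define u where "u = t ^ (n + 3 * m)"
  define T where "T = t ^ (3 * m)"
  define P where "P = t ^ (2 * n)"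
  define D where "D = (u * t + inverse (u * t)) - (u + inverse u)"
  have IH: "(1 - t ^ 3) * u * twist_part n m t = (t - 1) * (1 - T) * (P * T - t ^ 2)"
    using Suc.IH by (simp add: u_def T_def P_def)
  have D: "t ^ 3 * (u * D) = (t - 1) * (t ^ 3 * u ^ 2 - t ^ 2)"
    using assms by (simp add: D_def u_def field_simps power2_eq_square power3_eq_cube)
  have u2: "u ^ 2 = P * T ^ 2"
    by (simp add: u_def P_def T_def power_add power_mult_distrib ac_simps flip: power_mult)
  have "twist_part n (Suc m) t = twist_part n m t + D"
    by (simp add: twist_part_def D_def u_def)
  moreover have "t ^ (n + 3 * Suc m) = u * t ^ 3" "t ^ (3 * Suc m) = T * t ^ 3"
    by (simp_all add: u_def T_def power_add)
  moreover have "(1 - t ^ 3) * (u * t ^ 3) * (twist_part n m t + D) =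
      t ^ 3 * ((1 - t ^ 3) * u * twist_part n m t) + (1 - t ^ 3) * (t ^ 3 * (u * D))"
    by (simp add: algebra_simps)
  moreover have "\<dots> = (t - 1) * (1 - T * t ^ 3) * (P * (T * t ^ 3) - t ^ 2)"
    unfolding IH D u2 by (simp add: algebra_simps power2_eq_square power3_eq_cube)
  ultimately show ?case
    by (simp only: P_def)
qed

lemma Delta_K'_closed_form:
  assumes "t \<noteq> 0"
  shows "t ^ (r + 3 * m) * (1 - t ^ 3) * Delta_K' (r + 2) m t =
    t ^ (3 * m) * (1 - t ^ 3) * (\<Sum>j\<le>2 * r. (- t) ^ j) +
    (t - 1) * (1 - t ^ (3 * m)) * (t ^ (2 * r + 2) * t ^ (3 * m) - 1)"
proof -
  define T where "T = t ^ (3 * m)"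
  define E where "E = twist_part (r + 2) m t"
  have "(1 - t ^ 3) * (t ^ r * T * t ^ 2) * E = (t - 1) * (1 - T) * (t ^ (2 * r + 2) * t ^ 2 * T - t ^ 2)"
  proof -
    have "t ^ (r + 2 + 3 * m) = t ^ r * T * t ^ 2" "t ^ (2 * (r + 2)) = t ^ (2 * r + 2) * t ^ 2"
      by (simp_all add: T_def power_add power2_eq_square ac_simps)
    then show ?thesis
      using twist_part_closed_form[OF assms, of "r + 2" m, folded E_def T_def] by simp
  qed
  then have "t ^ 2 * (t ^ r * T * (1 - t ^ 3) * E) = t ^ 2 * ((t - 1) * (1 - T) * (t ^ (2 * r + 2) * T - 1))"
    by (simp add: algebra_simps)
  then have "t ^ r * T * (1 - t ^ 3) * E = (t - 1) * (1 - T) * (t ^ (2 * r + 2) * T - 1)"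
    using assms by simp
  then show ?thesis
    unfolding Delta_K'_eq_parts E_def[symmetric] alternating_part_closed_form[OF assms, symmetric]
    by (simp add: T_def power_add algebra_simps)
qed

lemma burau_det_eq_Delta_K':
  fixes t :: complex
  assumes "t \<noteq> 0"
  shows "(1 - t) * det (1\<^sub>m (3 - 1) - burau 3 (twisted_torus_braid 3 (3 * m + 1) 2 r) t) =
    t ^ (r + 3 * m) * (1 - t ^ 3) * Delta_K' (r + 2) m t"
proof -
  define s where "s = (\<Sum>i<2 * r. (- t) ^ i)"
  define a where "a = t ^ (2 * r)"
  define T where "T = t ^ (3 * m)"
  have "t ^ (3 * m + 1) = t * T"
    by (simp add: T_def)
  moreover have "t ^ (6 * m + 2 * r + 2) = t ^ 2 * T ^ 2 * a"
  proof -
    have "6 * m + 2 * r + 2 = 2 + 3 * m * 2 + 2 * r"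
      by simp
    then show ?thesis
      by (simp only: T_def a_def power_add power_mult)
  qed
  ultimately have det: "det (1\<^sub>m (3 - 1) - burau 3 (twisted_torus_braid 3 (3 * m + 1) 2 r) t) =
      1 - t * T * (s - 1) + t ^ 2 * T ^ 2 * a"
    unfolding det_burau_twisted_torus_3_2 s_def by (simp only:)
  have "(\<Sum>j\<le>2 * r. (- t) ^ j) = s + a" "t ^ (2 * r + 2) = a * t ^ 2"
    by (simp_all add: s_def a_def lessThan_Suc_atMost[symmetric] power_mult_distrib power_add
        power2_eq_square flip: power_mult)
  then have Delta: "t ^ (r + 3 * m) * (1 - t ^ 3) * Delta_K' (r + 2) m t =
      T * (1 - t ^ 3) * (s + a) + (t - 1) * (1 - T) * (a * t ^ 2 * T - 1)"
    unfolding Delta_K'_closed_form[OF assms] T_def by simp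
  have s: "(1 + t) * s = 1 - a"
    using one_diff_power_eq[of "- t" "2 * r"] by (simp add: s_def a_def power_mult power_mult_distrib)
  have "T * (1 - t ^ 3) * (s + a) + (t - 1) * (1 - T) * (a * t ^ 2 * T - 1) -
      (1 - t) * (1 - t * T * (s - 1) + t ^ 2 * T ^ 2 * a) = T * (1 - t) * (1 + t) * ((1 + t) * s - (1 - a))"
    by (simp add: algebra_simps power2_eq_square power3_eq_cube)
  then show ?thesis
    unfolding det Delta s by simp
qed

lemma Delta_K'_at_1:
  assumes "n \<ge> 2"
  shows "Delta_K' n m 1 = 1"
proof -
  obtain r where "n = r + 2"
    using assms by (metis add.commute le_Suc_ex)
  then show ?thesis
    using Delta_K'_eq_parts[of r m 1] alternating_part_at_1[of r] by (simp add: twist_part_def)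
qed

definition Delta_K'_coeffs :: "nat \<Rightarrow> nat \<Rightarrow> int \<Rightarrow> int" where
  "Delta_K'_coeffs n m k = (-1) ^ n * lmonom 0 k + (\<Sum>i = 1..n - 2. (-1) ^ (n - i) * lsym (int i) k)
    - (\<Sum>j<m. lsym (int (n + 3 * j)) k) + (\<Sum>j<m. lsym (int (n + 3 * j + 1)) k)"

lemma Delta_K'_coeffs_symmetric: "Delta_K'_coeffs n m k = Delta_K'_coeffs n m (- k)"
  by (simp add: Delta_K'_coeffs_def)

lemma Delta_K'_coeffs_support: "{k. Delta_K'_coeffs n m k \<noteq> 0} \<subseteq> {- int (n + 3 * m)..int (n + 3 * m)}"
proof (rule subsetI, rule ccontr)
  fix k
  assume "k \<in> {k. Delta_K'_coeffs n m k \<noteq> 0}" and out: "k \<notin> {- int (n + 3 * m)..int (n + 3 * m)}"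
  have lsym: "lsym (int i) k = 0" if "i \<le> n + 3 * m" for i
    using out that unfolding lsym_def lmonom_def by auto
  have "(\<Sum>i = 1..n - 2. (-1) ^ (n - i) * lsym (int i) k) = 0"
    by (intro sum.neutral ballI) (auto intro!: lsym)
  moreover have "(\<Sum>j<m. lsym (int (n + 3 * j)) k) = 0" "(\<Sum>j<m. lsym (int (n + 3 * j + 1)) k) = 0"
    by (intro sum.neutral ballI lsym; simp)+
  moreover have "lmonom 0 k = 0"
    using out by (auto simp: lmonom_def)
  ultimately have "Delta_K'_coeffs n m k = 0"
    unfolding Delta_K'_coeffs_def by simp
  with \<open>k \<in> {k. Delta_K'_coeffs n m k \<noteq> 0}\<close> show False
    by simp
qed

lemma lpeval_Delta_K'_coeffs: "lpeval (Delta_K'_coeffs n m) t = Delta_K' n m t"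
proof -
  define F where "F = {- int (n + 3 * m)..int (n + 3 * m)}"
  have "finite F" "0 \<in> F"
    by (simp_all add: F_def)
  have lsym: "lpeval_on F (lsym (int i)) t = t ^ i + inverse (t ^ i)" if "i \<le> n + 3 * m" for i
    using lpeval_on_lsym[OF \<open>finite F\<close>, of "int i" t] that by (simp add: F_def power_int_minus)
  have "(\<Sum>i = 1..n - 2. (-1) ^ (n - i) * lpeval_on F (lsym (int i)) t) =
      (\<Sum>i = 1..n - 2. (-1) ^ (n - i) * (t ^ i + inverse (t ^ i)))"
    by (intro sum.cong refl) (subst lsym; auto)
  moreover have "(\<Sum>j<m. lpeval_on F (lsym (int (n + 3 * j))) t) = (\<Sum>j<m. t ^ (n + 3 * j) + inverse (t ^ (n + 3 * j)))"
    by (intro sum.cong refl lsym) simp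
  moreover have "(\<Sum>j<m. lpeval_on F (lsym (int (n + 3 * j + 1))) t) =
      (\<Sum>j<m. t ^ (n + 3 * j + 1) + inverse (t ^ (n + 3 * j + 1)))"
    by (intro sum.cong refl lsym) simp
  moreover have "lpeval (Delta_K'_coeffs n m) t = lpeval_on F (Delta_K'_coeffs n m) t"
    using Delta_K'_coeffs_support by (intro lpeval_eq_lpeval_on) (auto simp: F_def)
  ultimately show ?thesis
    unfolding Delta_K'_coeffs_def[abs_def] lpeval_on_add lpeval_on_diff lpeval_on_scale lpeval_on_sum
    by (simp add: Delta_K'_def lpeval_on_lmonom[OF \<open>finite F\<close> \<open>0 \<in> F\<close>])
qed

lemma is_alexander_sym_Delta_K'_coeffs:
  assumes "n \<ge> 2"
  shows "is_alexander_sym 3 (twisted_torus_braid 3 (3 * m + 1) 2 (n - 2)) (Delta_K'_coeffs n m)"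
  unfolding is_alexander_sym_def
proof (intro conjI allI bexI[of _ 1] exI[of _ "int (n - 2 + 3 * m)"] impI)
  show "finite {k. Delta_K'_coeffs n m k \<noteq> 0}"
    by (rule finite_subset[OF Delta_K'_coeffs_support]) simp
  show "Delta_K'_coeffs n m k = Delta_K'_coeffs n m (- k)" for k
    by (rule Delta_K'_coeffs_symmetric)
  have "of_int (sum (Delta_K'_coeffs n m) {k. Delta_K'_coeffs n m k \<noteq> 0}) = (1::complex)"
    using lpeval_at_1 lpeval_Delta_K'_coeffs Delta_K'_at_1[OF assms] by metis
  then show "sum (Delta_K'_coeffs n m) {k. Delta_K'_coeffs n m k \<noteq> 0} = 1"
    by (simp only: of_int_eq_1_iff)
  fix t :: complex
  assume "t \<noteq> 0 \<and> 1 - t ^ 3 \<noteq> 0"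
  then have "t \<noteq> 0"
    by simp
  have "n - 2 + 2 = n"
    using assms by simp
  then have "(1 - t) * det (1\<^sub>m (3 - 1) - burau 3 (twisted_torus_braid 3 (3 * m + 1) 2 (n - 2)) t) =
      t ^ (n - 2 + 3 * m) * (1 - t ^ 3) * Delta_K' n m t"
    using burau_det_eq_Delta_K'[OF \<open>t \<noteq> 0\<close>, of m "n - 2"] by (simp only:)
  then show "(1 - t) * det (1\<^sub>m (3 - 1) - burau 3 (twisted_torus_braid 3 (3 * m + 1) 2 (n - 2)) t) =
      1 * t powi int (n - 2 + 3 * m) * (1 - t ^ 3) * lpeval (Delta_K'_coeffs n m) t"
    by (simp only: lpeval_Delta_K'_coeffs power_int_of_nat mult_1_left)
qed simp

theorem lemma3p4:
  fixes n m :: nat and t :: complex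
  assumes "n \<ge> 2" and "m \<ge> 1" and "t \<noteq> 0"
  shows "lpeval (alexander_sym 3 (twisted_torus_braid 3 (3 * m + 1) 2 (n - 2))) t =
    (-1) ^ n
    + (\<Sum>i = 1..n - 2. (-1) ^ (n - i) * (t ^ i + inverse (t ^ i)))
    - (\<Sum>k = 0..m - 1. t ^ (n + 3 * k) + inverse (t ^ (n + 3 * k)))
    + (\<Sum>k = 0..m - 1. t ^ (n + 3 * k + 1) + inverse (t ^ (n + 3 * k + 1)))"
proof -
  have "alexander_sym 3 (twisted_torus_braid 3 (3 * m + 1) 2 (n - 2)) = Delta_K'_coeffs n m"
    using is_alexander_sym_Delta_K'_coeffs[OF assms(1)] by (rule alexander_sym_eqI[rotated]) simp
  moreover have "{0..m - 1} = {..<m}"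
    using assms(2) by auto
  ultimately show ?thesis
    by (simp add: lpeval_Delta_K'_coeffs Delta_K'_def)
qed

end
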